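(* Let $G$ be a finite group and let $\chi, \chi' \in \mathrm{Irr}(G)$. Then $\sum_{C \in \mathrm{Conj}(G)} |C|^2 \chi(C)\overline{\chi'(C)}$ is an integer divisible by $|Z(G)|$.
   Context: $\mathrm{Irr}(G)$ is the set of irreducible complex characters of $G$, $\mathrm{Conj}(G)$ the set of conjugacy classes, $|C|$ the size of class $C$, $\chi(C)$ the value of $\chi$ on $C$, and $Z(G)$ the centre of $G$. *)

theory Defs
  imports "Jordan_Normal_Form.Matrix" "HOL-Algebra.Group"
begin

definition mtrace :: "complex mat \<Rightarrow> complex" where
  "mtrace A = (\<Sum>i<dim_row A. A $$ (i, i))"

definition is_rep :: "('g, 'b) monoid_scheme \<Rightarrow> nat \<Rightarrow> ('g \<Rightarrow> complex mat) \<Rightarrow> bool" where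
  "is_rep G n \<rho> \<longleftrightarrow>
     (\<forall>g\<in>carrier G. \<rho> g \<in> carrier_mat n n) \<and>
     (\<forall>g\<in>carrier G. \<forall>h\<in>carrier G. \<rho> (g \<otimes>\<^bsub>G\<^esub> h) = \<rho> g * \<rho> h) \<and>
     \<rho> \<one>\<^bsub>G\<^esub> = 1\<^sub>m n"

definition is_subspace_vec :: "nat \<Rightarrow> complex vec set \<Rightarrow> bool" where
  "is_subspace_vec n W \<longleftrightarrow> W \<subseteq> carrier_vec n \<and> 0\<^sub>v n \<in> W \<and>
     (\<forall>v\<in>W. \<forall>w\<in>W. v + w \<in> W) \<and> (\<forall>c v. v \<in> W \<longrightarrow> c \<cdot>\<^sub>v v \<in> W)"

definition irreducible_rep :: "('g, 'b) monoid_scheme \<Rightarrow> nat \<Rightarrow> ('g \<Rightarrow> complex mat) \<Rightarrow> bool" where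
  "irreducible_rep G n \<rho> \<longleftrightarrow> is_rep G n \<rho> \<and> n > 0 \<and>
     (\<forall>W. is_subspace_vec n W \<and> (\<forall>g\<in>carrier G. \<forall>w\<in>W. \<rho> g *\<^sub>v w \<in> W)
          \<longrightarrow> W = {0\<^sub>v n} \<or> W = carrier_vec n)"

definition Irr :: "('g, 'b) monoid_scheme \<Rightarrow> ('g \<Rightarrow> complex) set" where
  "Irr G = {\<chi>. \<exists>n \<rho>. irreducible_rep G n \<rho> \<and>
                 \<chi> = (\<lambda>g. if g \<in> carrier G then mtrace (\<rho> g) else 0)}"

definition conj_class :: "('g, 'b) monoid_scheme \<Rightarrow> 'g \<Rightarrow> 'g set" where
  "conj_class G g = {h \<otimes>\<^bsub>G\<^esub> g \<otimes>\<^bsub>G\<^esub> inv\<^bsub>G\<^esub> h | h. h \<in> carrier G}"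

definition Conj :: "('g, 'b) monoid_scheme \<Rightarrow> 'g set set" where
  "Conj G = conj_class G ` carrier G"

definition class_val :: "('g \<Rightarrow> complex) \<Rightarrow> 'g set \<Rightarrow> complex" where
  "class_val \<chi> C = \<chi> (SOME g. g \<in> C)"

definition centre :: "('g, 'b) monoid_scheme \<Rightarrow> 'g set" where
  "centre G = {z \<in> carrier G. \<forall>g\<in>carrier G. z \<otimes>\<^bsub>G\<^esub> g = g \<otimes>\<^bsub>G\<^esub> z}"

end

theory Submission
  imports Defs "Jordan_Normal_Form.Schur_Decomposition" "Jordan_Normal_Form.Spectral_Radius"
    "HOL-Algebra.Multiplicative_Group"
begin

(*
  Write the sum over elements: S = \<Sum>\<^sub>g |cl(g)| \<chi>(g) conj(\<chi>'(g)).

  S is rational: for k coprime to |G| the map g \<mapsto> g\<^sup>k permutes G and preserves class sizes,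
  so averaging over all such k replaces every product \<zeta> of eigenvalues in \<chi>(g) conj(\<chi>'(g))
  by the sum of \<zeta>\<^sup>k over k coprime to |G|, which is an integer (a Ramanujan sum).

  The centre Z acts by scalars \<lambda>(z), \<lambda>'(z) in the two representations. If
  \<lambda>(z) conj(\<lambda>'(z)) \<noteq> 1 for some z, translating by z shows S = 0. Otherwise the summand is
  constant on cosets of Z, and Schur's lemma applied to \<Sum>\<^sub>g |cl(g)| conj(\<chi>'(g)) \<rho>(g) gives
  q \<chi>(y) = n \<Sum>\<^sub>r |cl(r)| conj(\<chi>'(r)) \<chi>(r y) for q = S / |Z|, with r running over coset
  representatives. Expanding conj(\<chi>'(r)) into eigenvalues, this is an integral linear relation
  among the finitely many numbers u \<chi>(y), u a root of unity of order dividing |G|; so q is an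
  eigenvalue of an integer matrix, hence an algebraic integer, and being rational it is an
  integer.
*)

section \<open>Traces and eigenvalues\<close>

lemma mtrace_mult_comm:
  assumes A: "A \<in> carrier_mat n m" and B: "B \<in> carrier_mat m n"
  shows "mtrace (A * B) = mtrace (B * A)"
proof -
  have "mtrace (A * B) = (\<Sum>i<n. \<Sum>k<m. A $$ (i, k) * B $$ (k, i))"
    using A B by (auto simp: mtrace_def scalar_prod_def atLeast0LessThan intro!: sum.cong)
  also have "\<dots> = (\<Sum>k<m. \<Sum>i<n. B $$ (k, i) * A $$ (i, k))"
    by (subst sum.swap) (simp add: mult.commute)
  also have "\<dots> = mtrace (B * A)"
    using A B by (auto simp: mtrace_def scalar_prod_def atLeast0LessThan intro!: sum.cong)
  finally show ?thesis .
qed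

lemma upper_triangular_mult:
  fixes A B :: "'a :: semiring_0 mat"
  assumes A: "A \<in> carrier_mat n n" and B: "B \<in> carrier_mat n n"
    and utA: "upper_triangular A" and utB: "upper_triangular B"
  shows "upper_triangular (A * B)"
    and "i < n \<Longrightarrow> (A * B) $$ (i, i) = A $$ (i, i) * B $$ (i, i)"
proof -
  have entry: "(A * B) $$ (i, j) = (\<Sum>l<n. A $$ (i, l) * B $$ (l, j))" if "i < n" "j < n" for i j
    using A B that by (auto simp: scalar_prod_def atLeast0LessThan intro!: sum.cong)
  have A0: "A $$ (i, l) = 0" if "l < i" "i < n" for i l
    using utA A that by auto
  have B0: "B $$ (l, j) = 0" if "j < l" "l < n" for j l
    using utB B that by auto
  show "upper_triangular (A * B)"
  proof (rule upper_triangularI)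
    fix i j assume ji: "j < i" and "i < dim_row (A * B)"
    then have i: "i < n" using A by simp
    then have "(A * B) $$ (i, j) = (\<Sum>l<n. A $$ (i, l) * B $$ (l, j))" using ji by (simp add: entry)
    also have "\<dots> = 0"
    proof (rule sum.neutral, intro ballI)
      fix l assume "l \<in> {..<n}"
      then show "A $$ (i, l) * B $$ (l, j) = 0"
        using A0[of l i] B0[of j l] i ji by (cases "l < i") auto
    qed
    finally show "(A * B) $$ (i, j) = 0" .
  qed
  show "(A * B) $$ (i, i) = A $$ (i, i) * B $$ (i, i)" if i: "i < n"
  proof -
    have "(A * B) $$ (i, i) = (\<Sum>l<n. if l = i then A $$ (i, i) * B $$ (i, i) else 0)"
      unfolding entry[OF i i]
    proof (rule sum.cong[OF refl])
      fix l assume "l \<in> {..<n}"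
      then show "A $$ (i, l) * B $$ (l, i) = (if l = i then A $$ (i, i) * B $$ (i, i) else 0)"
        using A0[of l i] B0[of i l] i by (cases "l < i") auto
    qed
    then show ?thesis using i by simp
  qed
qed

lemma upper_triangular_power:
  fixes B :: "'a :: semiring_1 mat"
  assumes B: "B \<in> carrier_mat n n" and ut: "upper_triangular B"
  shows "upper_triangular (B ^\<^sub>m k) \<and> (\<forall>i<n. (B ^\<^sub>m k) $$ (i, i) = B $$ (i, i) ^ k)"
proof (induction k)
  case 0
  show ?case using B by auto
next
  case (Suc k)
  have Bk: "B ^\<^sub>m k \<in> carrier_mat n n" using B by simp
  have "(B ^\<^sub>m k * B) $$ (i, i) = B $$ (i, i) ^ Suc k" if i: "i < n" for i
  proof -
    have "(B ^\<^sub>m k * B) $$ (i, i) = (B ^\<^sub>m k) $$ (i, i) * B $$ (i, i)"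
      using upper_triangular_mult(2)[OF Bk B _ ut i] Suc by blast
    also have "\<dots> = B $$ (i, i) ^ Suc k" using Suc i by (simp add: power_commutes)
    finally show ?thesis .
  qed
  then show ?case
    unfolding pow_mat.simps(2) using upper_triangular_mult(1)[OF Bk B _ ut] Suc by blast
qed

lemma mtrace_power_eq_sum_eigenvalues:
  fixes A :: "complex mat"
  assumes A: "A \<in> carrier_mat n n"
  obtains es where "length es = n" and "\<And>e. e \<in> set es \<Longrightarrow> eigenvalue A e"
    and "\<And>k. mtrace (A ^\<^sub>m k) = (\<Sum>e\<leftarrow>es. e ^ k)"
proof -
  obtain es where cp: "char_poly A = (\<Prod>a\<leftarrow>es. [:- a, 1:])" and len: "length es = n"
    using char_poly_factorized[OF A] by auto
  obtain B P Q where sd: "schur_decomposition A es = (B, P, Q)"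
    by (cases "schur_decomposition A es") auto
  from schur_decomposition[OF A cp sd] have sim: "similar_mat_wit A B P Q"
    and ut: "upper_triangular B" and dg: "diag_mat B = es" by auto
  from similar_mat_witD2[OF A sim] have PQ: "Q * P = 1\<^sub>m n" and Bc: "B \<in> carrier_mat n n"
    and Pc: "P \<in> carrier_mat n n" and Qc: "Q \<in> carrier_mat n n" by auto
  have "mtrace (A ^\<^sub>m k) = (\<Sum>e\<leftarrow>es. e ^ k)" for k
  proof -
    have "mtrace (A ^\<^sub>m k) = mtrace ((P * B ^\<^sub>m k) * Q)"
      by (simp add: similar_mat_wit_pow_id[OF sim])
    also have "\<dots> = mtrace (Q * (P * B ^\<^sub>m k))"
      using Pc Bc Qc by (intro mtrace_mult_comm[of _ n n]) auto
    also have "Q * (P * B ^\<^sub>m k) = (Q * P) * B ^\<^sub>m k"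
      using Pc Bc Qc by (intro assoc_mult_mat[symmetric, of _ n n _ n _ n]) auto
    also have "\<dots> = B ^\<^sub>m k" using PQ Bc by simp
    also have "mtrace (B ^\<^sub>m k) = (\<Sum>i<n. B $$ (i, i) ^ k)"
      using upper_triangular_power[OF Bc ut, of k] Bc unfolding mtrace_def by auto
    also have "\<dots> = (\<Sum>e\<leftarrow>es. e ^ k)"
      using dg Bc unfolding diag_mat_def by (auto simp: sum_list_sum_nth atLeast0LessThan)
    finally show ?thesis .
  qed
  moreover have "eigenvalue A e" if e: "e \<in> set es" for e
  proof -
    have "poly (char_poly A) e = 0"
      unfolding cp using e by (induction es) (auto simp: poly_prod_list)
    then show ?thesis using eigenvalue_root_char_poly[OF A] by simp
  qed
  ultimately show ?thesis using that len by blast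
qed

lemma eigenvalue_root_of_unity:
  fixes A :: "'a :: field mat"
  assumes A: "A \<in> carrier_mat n n" and AN: "A ^\<^sub>m N = 1\<^sub>m n" and e: "eigenvalue A e"
  shows "e ^ N = 1"
proof -
  obtain v where ev: "eigenvector A v e" using e unfolding eigenvalue_def by auto
  then have v: "v \<in> carrier_vec n" "v \<noteq> 0\<^sub>v n" using A unfolding eigenvector_def by auto
  have fix_v: "v = e ^ N \<cdot>\<^sub>v v" using eigenvector_pow[OF A ev, of N] AN v by simp
  obtain i where i: "i < n" "v $ i \<noteq> 0"
    using v by (metis carrier_vecD eq_vecI index_zero_vec)
  have "v $ i = e ^ N * v $ i" using arg_cong[OF fix_v, of "\<lambda>w. w $ i"] i v by simp
  then show ?thesis using i by simp
qed

section \<open>Algebraic integers\<close>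

lemma algebraic_int_eigenvalue_of_int_mat:
  fixes A :: "int mat" and q :: "'a :: field_char_0"
  assumes A: "A \<in> carrier_mat m m" and q: "eigenvalue (map_mat of_int A) q"
  shows "algebraic_int q"
proof -
  have "poly (char_poly (map_mat of_int A)) q = 0"
    using q eigenvalue_root_char_poly[of "map_mat of_int A :: 'a mat" m] A by simp
  then have "poly (of_int_poly (char_poly A)) q = 0"
    unfolding of_int_hom.char_poly_hom[OF A] .
  moreover have "monic (char_poly A)" using degree_monic_char_poly[OF A] by simp
  ultimately show ?thesis
    by (intro algebraic_int.intros[of "of_int_poly (char_poly A)"]) auto
qed

(* Enumerating I turns the relations into an integer matrix with eigenvector (t i) and
   eigenvalue q. *)

lemma algebraic_int_of_integer_combinations:
  fixes t :: "'i \<Rightarrow> 'a :: field_char_0" and c :: "'j \<Rightarrow> int"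
  assumes I: "finite I" and z: "z \<in> I" "t z \<noteq> 0"
    and \<sigma>: "\<And>i j. i \<in> I \<Longrightarrow> j \<in> J \<Longrightarrow> \<sigma> i j \<in> I"
    and rel: "\<And>i. i \<in> I \<Longrightarrow> q * t i = (\<Sum>j\<in>J. of_int (c j) * t (\<sigma> i j))"
  shows "algebraic_int q"
proof -
  define m where "m = card I"
  obtain f where f: "bij_betw f {..<m} I"
    using ex_bij_betw_nat_finite[OF I] unfolding m_def atLeast0LessThan by auto
  define A :: "int mat" where "A = mat m m (\<lambda>(a, b). \<Sum>j\<in>J. if \<sigma> (f a) j = f b then c j else 0)"
  define v where "v = vec m (\<lambda>a. t (f a))"
  have pick: "(\<Sum>b<m. if x = f b then t (f b) else 0) = t x" if "x \<in> I" for x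
    using sum.reindex_bij_betw[OF f, of "\<lambda>y. if x = y then t y else 0"] I that by simp
  have fI: "f a \<in> I" if "a < m" for a using f that by (auto simp: bij_betw_def)
  have "map_mat of_int A *\<^sub>v v = q \<cdot>\<^sub>v v"
  proof (rule eq_vecI)
    fix a assume "a < dim_vec (q \<cdot>\<^sub>v v)"
    then have a: "a < m" by (simp add: v_def)
    have "(map_mat of_int A *\<^sub>v v) $ a
        = (\<Sum>b<m. \<Sum>j\<in>J. if \<sigma> (f a) j = f b then of_int (c j) * t (f b) else 0)"
      using a by (auto simp: A_def v_def scalar_prod_def atLeast0LessThan of_int_sum
          sum_distrib_right intro!: sum.cong)
    also have "\<dots> = (\<Sum>j\<in>J. of_int (c j) * (\<Sum>b<m. if \<sigma> (f a) j = f b then t (f b) else 0))"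
      by (subst sum.swap) (auto simp: sum_distrib_left intro!: sum.cong)
    also have "\<dots> = (\<Sum>j\<in>J. of_int (c j) * t (\<sigma> (f a) j))"
      using \<sigma>[OF fI[OF a]] by (intro sum.cong) (simp_all add: pick)
    also have "\<dots> = (q \<cdot>\<^sub>v v) $ a" using a rel[OF fI[OF a]] by (simp add: v_def)
    finally show "(map_mat of_int A *\<^sub>v v) $ a = (q \<cdot>\<^sub>v v) $ a" .
  qed (simp add: A_def v_def)
  moreover obtain a0 where "a0 < m" "f a0 = z"
    using f z(1) by (metis bij_betw_def imageE lessThan_iff)
  then have "v \<noteq> 0\<^sub>v m" using z(2) by (metis index_vec index_zero_vec(1) v_def)
  ultimately have "eigenvalue (map_mat of_int A) q"
    unfolding eigenvalue_def eigenvector_def by (intro exI[of _ v]) (simp add: A_def v_def)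
  moreover have "A \<in> carrier_mat m m" by (simp add: A_def)
  ultimately show ?thesis by (metis algebraic_int_eigenvalue_of_int_mat)
qed

section \<open>Ramanujan sums\<close>

(* For w = exp(2 \<pi> i m / N) this is the classical Ramanujan sum c\<^sub>N(m). *)

definition ramanujan_sum :: "nat \<Rightarrow> complex \<Rightarrow> complex" where
  "ramanujan_sum N w = (\<Sum>k\<in>{k\<in>{1..N}. coprime k N}. w ^ k)"

lemma sum_powers_root_of_unity_Ints:
  fixes w :: complex
  assumes "w ^ N = 1"
  shows "(\<Sum>k\<in>{1..N}. w ^ k) \<in> \<int>"
proof (cases "w = 1")
  case False
  have "(\<Sum>k\<in>{1..M}. w ^ k) * (w - 1) = w ^ Suc M - w" for M
    by (induction M) (auto simp: algebra_simps)
  from this[of N] assms False have "(\<Sum>k\<in>{1..N}. w ^ k) = 0" by simp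
  then show ?thesis by simp
qed simp

lemma sum_powers_eq_sum_ramanujan_sums:
  fixes w :: complex
  assumes N: "N > 0"
  shows "(\<Sum>k\<in>{1..N}. w ^ k) = (\<Sum>d\<in>{d. d dvd N}. ramanujan_sum (N div d) (w ^ d))"
proof -
  have fin: "finite {d. d dvd N}" using N by simp
  have "(\<Sum>k\<in>{1..N}. w ^ k) = (\<Sum>d\<in>{d. d dvd N}. \<Sum>k\<in>{k\<in>{1..N}. gcd k N = d}. w ^ k)"
    by (rule sum.group[symmetric]) (auto simp: fin)
  also have "\<dots> = (\<Sum>d\<in>{d. d dvd N}. ramanujan_sum (N div d) (w ^ d))"
  proof (rule sum.cong[OF refl])
    fix d assume "d \<in> {d. d dvd N}"
    then obtain e where e: "N = d * e" by auto
    then have d0: "d > 0" using N by auto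
    have img: "(\<lambda>m. d * m) ` {m\<in>{1..e}. coprime m e} = {k\<in>{1..N}. gcd k N = d}"
    proof (intro equalityI subsetI)
      fix k assume "k \<in> (\<lambda>m. d * m) ` {m\<in>{1..e}. coprime m e}"
      then obtain m where m: "m \<in> {1..e}" "coprime m e" "k = d * m" by auto
      have "gcd k N = d * gcd m e" unfolding m(3) e by (simp add: gcd_mult_distrib_nat)
      then show "k \<in> {k\<in>{1..N}. gcd k N = d}" using m d0 e by auto
    next
      fix k assume k: "k \<in> {k\<in>{1..N}. gcd k N = d}"
      then have "d dvd k" by (metis (mono_tags) gcd_dvd1 mem_Collect_eq)
      then obtain m where m: "k = d * m" by auto
      have "d * gcd m e = d" using k unfolding m e by (simp add: gcd_mult_distrib_nat)
      then have "gcd m e = 1" using d0 by simp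
      moreover have "m \<in> {1..e}" using k d0 unfolding m e by auto
      ultimately show "k \<in> (\<lambda>m. d * m) ` {m\<in>{1..e}. coprime m e}"
        using m by (auto simp: coprime_iff_gcd_eq_1)
    qed
    have "(\<Sum>k\<in>{k\<in>{1..N}. gcd k N = d}. w ^ k) = (\<Sum>m\<in>{m\<in>{1..e}. coprime m e}. w ^ (d * m))"
      unfolding img[symmetric] using d0 by (subst sum.reindex) (auto simp: inj_on_def)
    also have "\<dots> = ramanujan_sum (N div d) (w ^ d)"
      using d0 unfolding e ramanujan_sum_def by (simp add: power_mult)
    finally show "(\<Sum>k\<in>{k\<in>{1..N}. gcd k N = d}. w ^ k) = ramanujan_sum (N div d) (w ^ d)" .
  qed
  finally show ?thesis .
qed

lemma ramanujan_sum_Ints: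
  assumes "N > 0" and "w ^ N = 1"
  shows "ramanujan_sum N w \<in> \<int>"
  using assms
proof (induction N arbitrary: w rule: less_induct)
  case (less N)
  have fin: "finite {d. d dvd N}" using less.prems by simp
  have one: "1 \<in> {d. d dvd N}" by simp
  have "(\<Sum>k\<in>{1..N}. w ^ k)
      = ramanujan_sum N w + (\<Sum>d\<in>{d. d dvd N} - {1}. ramanujan_sum (N div d) (w ^ d))"
    unfolding sum_powers_eq_sum_ramanujan_sums[OF less.prems(1)] sum.remove[OF fin one] by simp
  then have eq: "ramanujan_sum N w
      = (\<Sum>k\<in>{1..N}. w ^ k) - (\<Sum>d\<in>{d. d dvd N} - {1}. ramanujan_sum (N div d) (w ^ d))"
    by (simp add: algebra_simps)
  have "(\<Sum>d\<in>{d. d dvd N} - {1}. ramanujan_sum (N div d) (w ^ d)) \<in> \<int>"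
  proof (rule Ints_sum)
    fix d assume d: "d \<in> {d. d dvd N} - {1}"
    then obtain e where e: "N = d * e" by auto
    then have "d > 1" "e > 0" using less.prems d by (auto simp: nat_neq_iff)
    then have "N div d < N" "N div d > 0" "(w ^ d) ^ (N div d) = 1"
      using e less.prems by (auto simp: power_mult[symmetric])
    then show "ramanujan_sum (N div d) (w ^ d) \<in> \<int>" using less.IH by blast
  qed
  then show ?case
    unfolding eq using sum_powers_root_of_unity_Ints[OF less.prems(2)] by (rule Ints_diff[rotated])
qed

section \<open>Groups\<close>

definition rcoset_rep :: "'a set \<Rightarrow> 'a" where
  "rcoset_rep c = (SOME g. g \<in> c)"

context group
begin

lemma inv_mult_cancel_left [simp]:
  "x \<in> carrier G \<Longrightarrow> y \<in> carrier G \<Longrightarrow> inv x \<otimes> (x \<otimes> y) = y"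
  by (simp add: m_assoc[symmetric])

lemma mult_inv_cancel_left [simp]:
  "x \<in> carrier G \<Longrightarrow> y \<in> carrier G \<Longrightarrow> x \<otimes> (inv x \<otimes> y) = y"
  by (simp add: m_assoc[symmetric])

lemma conj_class_image: "conj_class G g = (\<lambda>h. h \<otimes> g \<otimes> inv h) ` carrier G"
  unfolding conj_class_def by auto

lemma conj_class_subset_carrier: "g \<in> carrier G \<Longrightarrow> conj_class G g \<subseteq> carrier G"
  unfolding conj_class_def by auto

lemma conj_in_conj_class: "g \<in> carrier G \<Longrightarrow> h \<in> carrier G \<Longrightarrow> h \<otimes> g \<otimes> inv h \<in> conj_class G g"
  unfolding conj_class_def by auto

lemma conj_class_self: "g \<in> carrier G \<Longrightarrow> g \<in> conj_class G g"
  using conj_in_conj_class[of g \<one>] by simp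

lemma conj_class_eq:
  assumes g: "g \<in> carrier G" and b: "b \<in> conj_class G g"
  shows "conj_class G b = conj_class G g"
proof -
  from b obtain h where h: "h \<in> carrier G" and bdef: "b = h \<otimes> g \<otimes> inv h"
    unfolding conj_class_def by auto
  have gdef: "g = inv h \<otimes> b \<otimes> inv (inv h)" using g h unfolding bdef by (simp add: m_assoc)
  have b_in: "b \<in> carrier G" using g h bdef by simp
  have conj_comp: "k \<otimes> (l \<otimes> x \<otimes> inv l) \<otimes> inv k = (k \<otimes> l) \<otimes> x \<otimes> inv (k \<otimes> l)"
    if "k \<in> carrier G" "l \<in> carrier G" "x \<in> carrier G" for k l x
    using that by (simp add: m_assoc inv_mult_group)
  show ?thesis
  proof (intro equalityI subsetI)
    fix x assume "x \<in> conj_class G b"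
    then show "x \<in> conj_class G g"
      unfolding bdef conj_class_def using g h conj_comp by force
  next
    fix x assume "x \<in> conj_class G g"
    then show "x \<in> conj_class G b"
      unfolding conj_class_def using b_in h conj_comp[of _ "inv h" b] gdef by force
  qed
qed

lemma class_function_on_conj_class:
  assumes cf: "\<And>g h. g \<in> carrier G \<Longrightarrow> h \<in> carrier G \<Longrightarrow> f (h \<otimes> g \<otimes> inv h) = f g"
    and a: "a \<in> carrier G" and g: "g \<in> conj_class G a"
  shows "f g = f a"
  using g cf[OF a] unfolding conj_class_def by auto

lemma card_conj_class_conj:
  "g \<in> carrier G \<Longrightarrow> h \<in> carrier G \<Longrightarrow> card (conj_class G (h \<otimes> g \<otimes> inv h)) = card (conj_class G g)"
  using conj_class_eq[OF _ conj_in_conj_class] by presburger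

lemma sum_reindex_conj:
  assumes h: "h \<in> carrier G"
  shows "(\<Sum>g\<in>carrier G. F (h \<otimes> g \<otimes> inv h)) = (\<Sum>g\<in>carrier G. F g)"
  by (rule sum.reindex_bij_witness[where j = "\<lambda>g. h \<otimes> g \<otimes> inv h" and i = "\<lambda>g. inv h \<otimes> g \<otimes> h"])
    (use h in \<open>auto simp: m_assoc\<close>)

lemma sum_reindex_mult_left:
  assumes h: "h \<in> carrier G"
  shows "(\<Sum>g\<in>carrier G. F (h \<otimes> g)) = (\<Sum>g\<in>carrier G. F g)"
  by (rule sum.reindex_bij_witness[where j = "\<lambda>g. h \<otimes> g" and i = "\<lambda>g. inv h \<otimes> g"])
    (use h in \<open>auto simp: m_assoc[symmetric]\<close>)

lemma conj_pow:
  assumes g: "g \<in> carrier G" and h: "h \<in> carrier G"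
  shows "(h \<otimes> g \<otimes> inv h) [^] (k::nat) = h \<otimes> g [^] k \<otimes> inv h"
proof (induction k)
  case (Suc k)
  have "(h \<otimes> g \<otimes> inv h) [^] Suc k = h \<otimes> g [^] k \<otimes> (inv h \<otimes> h) \<otimes> g \<otimes> inv h"
    using Suc g h by (simp add: m_assoc)
  also have "\<dots> = h \<otimes> g [^] Suc k \<otimes> inv h" using g h by (simp add: m_assoc)
  finally show ?case .
qed (use h in simp)

lemma bij_betw_pow_coprime_order:
  assumes k: "coprime k (order G)" "k > 0"
  shows "bij_betw (\<lambda>g. g [^] k) (carrier G) (carrier G)"
proof -
  obtain x y where "k * x = order G * y + gcd k (order G)" using bezout_nat[of k] k by blast
  then have xy: "k * x = order G * y + 1" using k by simp
  have inverse: "g [^] (k * x) = g" if "g \<in> carrier G" for g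
    using that by (simp add: xy nat_pow_mult[symmetric] nat_pow_pow[symmetric] pow_order_eq_1)
  show ?thesis
    by (rule bij_betwI[where g = "\<lambda>g. g [^] x"]) (auto simp: nat_pow_pow inverse mult.commute)
qed

lemma card_conj_class_pow:
  assumes g: "g \<in> carrier G" and k: "coprime k (order G)" "k > 0"
  shows "card (conj_class G (g [^] k)) = card (conj_class G g)"
proof -
  have "conj_class G (g [^] k) = (\<lambda>x. x [^] k) ` conj_class G g"
    unfolding conj_class_image image_image using conj_pow[OF g] by (intro image_cong) auto
  moreover have "inj_on (\<lambda>x. x [^] k) (conj_class G g)"
    using bij_betw_pow_coprime_order[OF k] conj_class_subset_carrier[OF g]
    by (meson bij_betw_imp_inj_on inj_on_subset)
  ultimately show ?thesis by (simp add: card_image)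
qed

lemma centre_subgroup: "subgroup (centre G) G"
proof (rule subgroupI)
  show "centre G \<subseteq> carrier G" "centre G \<noteq> {}" unfolding centre_def by auto
next
  fix a assume "a \<in> centre G"
  then have a: "a \<in> carrier G" "\<And>g. g \<in> carrier G \<Longrightarrow> a \<otimes> g = g \<otimes> a" unfolding centre_def by auto
  have "inv a \<otimes> g = g \<otimes> inv a" if g: "g \<in> carrier G" for g
  proof -
    have "inv a \<otimes> g = inv a \<otimes> (g \<otimes> a \<otimes> inv a)" using g a(1) by (simp add: m_assoc)
    also have "\<dots> = inv a \<otimes> (a \<otimes> g \<otimes> inv a)" using a(2)[OF g] by simp
    also have "\<dots> = g \<otimes> inv a" using g a(1) by (simp add: m_assoc)
    finally show ?thesis .
  qed
  then show "inv a \<in> centre G" using a unfolding centre_def by auto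
next
  fix a b assume "a \<in> centre G" "b \<in> centre G"
  then have ab: "a \<in> carrier G" "b \<in> carrier G"
    and comm: "\<And>g. g \<in> carrier G \<Longrightarrow> a \<otimes> g = g \<otimes> a" "\<And>g. g \<in> carrier G \<Longrightarrow> b \<otimes> g = g \<otimes> b"
    unfolding centre_def by auto
  have "a \<otimes> b \<otimes> g = g \<otimes> (a \<otimes> b)" if g: "g \<in> carrier G" for g
  proof -
    have "a \<otimes> b \<otimes> g = a \<otimes> (g \<otimes> b)" using ab g comm(2)[OF g] by (simp add: m_assoc)
    also have "\<dots> = g \<otimes> (a \<otimes> b)" using ab g comm(1)[OF g] by (simp add: m_assoc[symmetric])
    finally show ?thesis .
  qed
  then show "a \<otimes> b \<in> centre G" using ab unfolding centre_def by auto
qed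

lemma card_conj_class_centre_mult:
  assumes z: "z \<in> centre G" and g: "g \<in> carrier G"
  shows "card (conj_class G (z \<otimes> g)) = card (conj_class G g)"
proof -
  have zc: "z \<in> carrier G" using z unfolding centre_def by auto
  have "h \<otimes> (z \<otimes> g) \<otimes> inv h = z \<otimes> (h \<otimes> g \<otimes> inv h)" if h: "h \<in> carrier G" for h
  proof -
    have "z \<otimes> h = h \<otimes> z" using z h unfolding centre_def by auto
    then show ?thesis using h zc g by (simp add: m_assoc[symmetric])
  qed
  then have "conj_class G (z \<otimes> g) = (\<lambda>x. z \<otimes> x) ` conj_class G g"
    unfolding conj_class_image image_image by (intro image_cong) auto
  moreover have "inj_on (\<lambda>x. z \<otimes> x) (conj_class G g)"
    using inj_on_cmult[OF zc] conj_class_subset_carrier[OF g] by (rule inj_on_subset)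
  ultimately show ?thesis by (simp add: card_image)
qed

lemma rcoset_rep:
  assumes H: "subgroup H G" and c: "c \<in> rcosets H"
  shows "rcoset_rep c \<in> c" and "rcoset_rep c \<in> carrier G"
proof -
  obtain a where a: "a \<in> carrier G" and cdef: "c = H #> a" using c unfolding RCOSETS_def by auto
  show "rcoset_rep c \<in> c" unfolding rcoset_rep_def using rcos_self[OF a H] cdef by (metis someI)
  then show "rcoset_rep c \<in> carrier G"
    using r_coset_subset_G[OF subgroup.subset[OF H] a] cdef by auto
qed

end

locale finite_group = group +
  assumes finite_carrier: "finite (carrier G)"
begin

lemma sum_Conj_eq_sum_carrier:
  fixes \<phi> \<psi> :: "'a \<Rightarrow> complex"
  assumes \<phi>: "\<And>g h. g \<in> carrier G \<Longrightarrow> h \<in> carrier G \<Longrightarrow> \<phi> (h \<otimes> g \<otimes> inv h) = \<phi> g"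
    and \<psi>: "\<And>g h. g \<in> carrier G \<Longrightarrow> h \<in> carrier G \<Longrightarrow> \<psi> (h \<otimes> g \<otimes> inv h) = \<psi> g"
  shows "(\<Sum>C\<in>Conj G. of_nat (card C ^ 2) * class_val \<phi> C * cnj (class_val \<psi> C))
       = (\<Sum>g\<in>carrier G. of_nat (card (conj_class G g)) * \<phi> g * cnj (\<psi> g))"
proof -
  have disjoint: "C1 \<inter> C2 = {}" if "C1 \<in> Conj G" "C2 \<in> Conj G" "C1 \<noteq> C2" for C1 C2
    using that conj_class_eq unfolding Conj_def by blast
  have finite_class: "finite C" if "C \<in> Conj G" for C
    using that finite_carrier conj_class_subset_carrier finite_subset unfolding Conj_def by blast
  have "\<Union> (Conj G) = carrier G"
    unfolding Conj_def using conj_class_subset_carrier conj_class_self by blast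
  then have "(\<Sum>g\<in>carrier G. of_nat (card (conj_class G g)) * \<phi> g * cnj (\<psi> g))
      = (\<Sum>C\<in>Conj G. \<Sum>g\<in>C. of_nat (card (conj_class G g)) * \<phi> g * cnj (\<psi> g))"
    using sum.Union_disjoint[of "Conj G"] finite_class disjoint by simp
  also have "\<dots> = (\<Sum>C\<in>Conj G. of_nat (card C ^ 2) * class_val \<phi> C * cnj (class_val \<psi> C))"
  proof (rule sum.cong[OF refl])
    fix C assume "C \<in> Conj G"
    then obtain a where a: "a \<in> carrier G" and C: "C = conj_class G a" unfolding Conj_def by auto
    have on_C: "card (conj_class G g) = card C" "\<phi> g = \<phi> a" "\<psi> g = \<psi> a" if "g \<in> C" for g
      using that unfolding C
      by (simp_all add: conj_class_eq[OF a] class_function_on_conj_class[of \<phi>, OF \<phi> a]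
          class_function_on_conj_class[of \<psi>, OF \<psi> a])
    have "(SOME g. g \<in> C) \<in> C" using conj_class_self[OF a] C by (metis someI)
    then have class_val: "class_val \<phi> C = \<phi> a" "class_val \<psi> C = \<psi> a"
      unfolding class_val_def by (simp_all add: on_C)
    have "(\<Sum>g\<in>C. of_nat (card (conj_class G g)) * \<phi> g * cnj (\<psi> g))
        = (\<Sum>g\<in>C. of_nat (card C) * \<phi> a * cnj (\<psi> a))"
      using on_C by (intro sum.cong) auto
    also have "\<dots> = of_nat (card C ^ 2) * class_val \<phi> C * cnj (class_val \<psi> C)"
      by (simp add: class_val power2_eq_square)
    finally show "(\<Sum>g\<in>C. of_nat (card (conj_class G g)) * \<phi> g * cnj (\<psi> g))
        = of_nat (card C ^ 2) * class_val \<phi> C * cnj (class_val \<psi> C)" .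
  qed
  finally show ?thesis by simp
qed

lemma card_centre_pos: "card (centre G) > 0"
  using centre_subgroup subgroup.subset subgroup.one_closed finite_carrier
  by (metis card_gt_0_iff empty_iff finite_subset)

lemma sum_constant_on_rcosets:
  fixes F :: "'a \<Rightarrow> 'c :: comm_semiring_1"
  assumes H: "subgroup H G" and F: "\<And>h g. h \<in> H \<Longrightarrow> g \<in> carrier G \<Longrightarrow> F (h \<otimes> g) = F g"
  shows "(\<Sum>g\<in>carrier G. F g) = of_nat (card H) * (\<Sum>c\<in>rcosets H. F (rcoset_rep c))"
proof -
  have HG: "H \<subseteq> carrier G" using H subgroup.subset by blast
  have "finite c" if "c \<in> rcosets H" for c
    using that rcosets_subset_PowG[OF H] finite_carrier by (meson PowD finite_subset subsetD)
  then have finite_coset: "\<forall>c\<in>rcosets H. finite c" by blast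
  have disjoint: "\<forall>c\<in>rcosets H. \<forall>c'\<in>rcosets H. c \<noteq> c' \<longrightarrow> c \<inter> c' = {}"
    using rcos_disjoint[OF H] unfolding pairwise_def disjnt_def by blast
  have "(\<Sum>g\<in>carrier G. F g) = (\<Sum>c\<in>rcosets H. \<Sum>g\<in>c. F g)"
    unfolding rcosets_part_G[OF H, symmetric] sum.Union_disjoint[OF finite_coset disjoint] by simp
  also have "\<dots> = (\<Sum>c\<in>rcosets H. of_nat (card H) * F (rcoset_rep c))"
  proof (rule sum.cong[OF refl])
    fix c assume c: "c \<in> rcosets H"
    then obtain a where a: "a \<in> carrier G" and cdef: "c = H #> a" unfolding RCOSETS_def by auto
    have const: "F g = F a" if "g \<in> c" for g
      using that F a unfolding cdef r_coset_def by auto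
    show "(\<Sum>g\<in>c. F g) = of_nat (card H) * F (rcoset_rep c)"
      using const rcoset_rep(1)[OF H c] card_rcosets_equal[OF c HG] by simp
  qed
  finally show ?thesis by (simp add: sum_distrib_left)
qed

end

section \<open>Irreducible representations\<close>

lemma schur_lemma:
  assumes irr: "irreducible_rep G n \<rho>" and K: "K \<in> carrier_mat n n"
    and comm: "\<And>g. g \<in> carrier G \<Longrightarrow> K * \<rho> g = \<rho> g * K"
  obtains c where "K = c \<cdot>\<^sub>m 1\<^sub>m n"
proof -
  from irr have n: "n > 0" and rhoC: "\<And>g. g \<in> carrier G \<Longrightarrow> \<rho> g \<in> carrier_mat n n"
    unfolding irreducible_rep_def is_rep_def by auto
  from spectrum_non_empty[OF K n] obtain c where "eigenvalue K c"
    unfolding spectrum_def by auto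
  then obtain v where "eigenvector K v c" unfolding eigenvalue_def by auto
  then have v: "v \<in> carrier_vec n" "v \<noteq> 0\<^sub>v n" "K *\<^sub>v v = c \<cdot>\<^sub>v v"
    using K unfolding eigenvector_def by auto
  define W where "W = {w \<in> carrier_vec n. K *\<^sub>v w = c \<cdot>\<^sub>v w}"
  have "is_subspace_vec n W"
    unfolding is_subspace_vec_def
  proof (intro conjI ballI allI impI)
    show "W \<subseteq> carrier_vec n" unfolding W_def by auto
    show "0\<^sub>v n \<in> W" unfolding W_def using K by auto
  next
    fix a b assume "a \<in> W" "b \<in> W"
    then show "a + b \<in> W" using K unfolding W_def
      by (auto simp: mult_add_distrib_mat_vec smult_add_distrib_vec)
  next
    fix d a assume "a \<in> W"
    then show "d \<cdot>\<^sub>v a \<in> W" using K unfolding W_def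
      by (auto simp: mult_mat_vec smult_smult_assoc mult.commute)
  qed
  moreover have "\<rho> g *\<^sub>v w \<in> W" if g: "g \<in> carrier G" and w: "w \<in> W" for g w
  proof -
    have "K *\<^sub>v (\<rho> g *\<^sub>v w) = (K * \<rho> g) *\<^sub>v w"
      using K rhoC[OF g] w unfolding W_def by (auto simp: assoc_mult_mat_vec)
    also have "\<dots> = (\<rho> g * K) *\<^sub>v w" using comm[OF g] by simp
    also have "\<dots> = \<rho> g *\<^sub>v (K *\<^sub>v w)"
      using K rhoC[OF g] w unfolding W_def by (auto simp: assoc_mult_mat_vec)
    also have "\<dots> = c \<cdot>\<^sub>v (\<rho> g *\<^sub>v w)"
      using w rhoC[OF g] unfolding W_def by (auto simp: mult_mat_vec)
    finally show ?thesis using w rhoC[OF g] unfolding W_def by auto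
  qed
  ultimately have "W = {0\<^sub>v n} \<or> W = carrier_vec n" using irr unfolding irreducible_rep_def by blast
  moreover have "v \<in> W" using v unfolding W_def by auto
  ultimately have W: "W = carrier_vec n" using v by auto
  have "K = c \<cdot>\<^sub>m 1\<^sub>m n"
  proof (rule eq_matI)
    fix i j assume i: "i < dim_row (c \<cdot>\<^sub>m 1\<^sub>m n)" and j: "j < dim_col (c \<cdot>\<^sub>m 1\<^sub>m n)"
    have "unit_vec n j \<in> W" using W j by auto
    then have "K *\<^sub>v unit_vec n j = c \<cdot>\<^sub>v unit_vec n j" unfolding W_def by auto
    then have "(K *\<^sub>v unit_vec n j) $ i = (c \<cdot>\<^sub>v unit_vec n j) $ i" by simp
    then show "K $$ (i, j) = (c \<cdot>\<^sub>m 1\<^sub>m n) $$ (i, j)" using i j K by auto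
  qed (use K in auto)
  then show ?thesis by (rule that)
qed

locale irrep = finite_group +
  fixes n :: nat and \<rho> :: "'a \<Rightarrow> complex mat"
  assumes irreducible: "irreducible_rep G n \<rho>"
begin

definition chi :: "'a \<Rightarrow> complex" where "chi g = mtrace (\<rho> g)"

lemma n_pos: "n > 0"
  using irreducible unfolding irreducible_rep_def by auto

lemma rho_carrier: "g \<in> carrier G \<Longrightarrow> \<rho> g \<in> carrier_mat n n"
  using irreducible unfolding irreducible_rep_def is_rep_def by auto

lemma rho_mult: "g \<in> carrier G \<Longrightarrow> h \<in> carrier G \<Longrightarrow> \<rho> (g \<otimes> h) = \<rho> g * \<rho> h"
  using irreducible unfolding irreducible_rep_def is_rep_def by auto

lemma rho_one: "\<rho> \<one> = 1\<^sub>m n"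
  using irreducible unfolding irreducible_rep_def is_rep_def by auto

lemma rho_pow:
  assumes g: "g \<in> carrier G"
  shows "\<rho> (g [^] (k::nat)) = \<rho> g ^\<^sub>m k"
proof -
  have "dim_row (\<rho> g) = n" using rho_carrier[OF g] by simp
  then show ?thesis using g by (induction k) (simp_all add: rho_one rho_mult)
qed

lemma chi_conj:
  assumes g: "g \<in> carrier G" and h: "h \<in> carrier G"
  shows "chi (h \<otimes> g \<otimes> inv h) = chi g"
proof -
  have C: "\<rho> g \<in> carrier_mat n n" "\<rho> h \<in> carrier_mat n n" "\<rho> (inv h) \<in> carrier_mat n n"
    using g h by (simp_all add: rho_carrier)
  have inv: "\<rho> (inv h) * \<rho> h = 1\<^sub>m n" using rho_mult[of "inv h" h] h by (simp add: rho_one)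
  have "chi (h \<otimes> g \<otimes> inv h) = mtrace ((\<rho> h * \<rho> g) * \<rho> (inv h))"
    unfolding chi_def using g h by (simp add: rho_mult)
  also have "\<dots> = mtrace (\<rho> (inv h) * (\<rho> h * \<rho> g))"
    by (rule mtrace_mult_comm[OF mult_carrier_mat[OF C(2,1)] C(3)])
  also have "\<rho> (inv h) * (\<rho> h * \<rho> g) = (\<rho> (inv h) * \<rho> h) * \<rho> g"
    by (rule assoc_mult_mat[OF C(3,2,1), symmetric])
  also have "\<dots> = \<rho> g" using inv C(1) by simp
  finally show ?thesis unfolding chi_def .
qed

definition eigvals :: "'a \<Rightarrow> complex list" where
  "eigvals g = (SOME es. length es = n \<and> (\<forall>e\<in>set es. e ^ order G = 1)
                 \<and> (\<forall>k. chi (g [^] k) = (\<Sum>e\<leftarrow>es. e ^ k)))"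

lemma eigvals_spec:
  assumes g: "g \<in> carrier G"
  shows "length (eigvals g) = n" and "\<And>e. e \<in> set (eigvals g) \<Longrightarrow> e ^ order G = 1"
    and "\<And>k. chi (g [^] k) = (\<Sum>e\<leftarrow>eigvals g. e ^ k)"
proof -
  obtain es where es: "length es = n" "\<And>e. e \<in> set es \<Longrightarrow> eigenvalue (\<rho> g) e"
    "\<And>k. mtrace (\<rho> g ^\<^sub>m k) = (\<Sum>e\<leftarrow>es. e ^ k)"
    using mtrace_power_eq_sum_eigenvalues[OF rho_carrier[OF g]] by blast
  have "\<rho> g ^\<^sub>m order G = 1\<^sub>m n"
    using rho_pow[OF g, of "order G"] pow_order_eq_1[OF g] rho_one by simp
  then have "\<forall>e\<in>set es. e ^ order G = 1"
    using eigenvalue_root_of_unity[OF rho_carrier[OF g]] es(2) by blast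
  moreover have "\<forall>k. chi (g [^] k) = (\<Sum>e\<leftarrow>es. e ^ k)"
    unfolding chi_def rho_pow[OF g] using es(3) by simp
  ultimately have "\<exists>es. length es = n \<and> (\<forall>e\<in>set es. e ^ order G = 1)
      \<and> (\<forall>k. chi (g [^] k) = (\<Sum>e\<leftarrow>es. e ^ k))"
    using es(1) by blast
  then have "length (eigvals g) = n \<and> (\<forall>e\<in>set (eigvals g). e ^ order G = 1)
      \<and> (\<forall>k. chi (g [^] k) = (\<Sum>e\<leftarrow>eigvals g. e ^ k))"
    unfolding eigvals_def by (rule someI_ex)
  then show "length (eigvals g) = n" "\<And>e. e \<in> set (eigvals g) \<Longrightarrow> e ^ order G = 1"
    "\<And>k. chi (g [^] k) = (\<Sum>e\<leftarrow>eigvals g. e ^ k)" by blast+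
qed

lemma chi_pow_eq_sum_eigvals:
  "g \<in> carrier G \<Longrightarrow> chi (g [^] k) = (\<Sum>i<n. eigvals g ! i ^ k)"
  using eigvals_spec[of g] by (simp add: sum_list_sum_nth atLeast0LessThan)

definition rho_sum :: "('a \<Rightarrow> complex) \<Rightarrow> complex mat" where
  "rho_sum f = mat n n (\<lambda>(i, j). \<Sum>g\<in>carrier G. f g * \<rho> g $$ (i, j))"

lemma rho_sum_carrier: "rho_sum f \<in> carrier_mat n n"
  unfolding rho_sum_def by auto

lemma index_rho_sum_mult:
  assumes B: "B \<in> carrier_mat n n" and ij: "i < n" "j < n"
  shows "(rho_sum f * B) $$ (i, j) = (\<Sum>g\<in>carrier G. f g * (\<rho> g * B) $$ (i, j))"
proof -
  have "(rho_sum f * B) $$ (i, j) = (\<Sum>k<n. (\<Sum>g\<in>carrier G. f g * \<rho> g $$ (i, k)) * B $$ (k, j))"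
    using B ij unfolding rho_sum_def by (auto simp: scalar_prod_def atLeast0LessThan intro!: sum.cong)
  also have "\<dots> = (\<Sum>g\<in>carrier G. \<Sum>k<n. f g * \<rho> g $$ (i, k) * B $$ (k, j))"
    by (simp add: sum_distrib_right sum.swap[of _ "{..<n}"])
  also have "\<dots> = (\<Sum>g\<in>carrier G. f g * (\<rho> g * B) $$ (i, j))"
  proof (rule sum.cong[OF refl])
    fix g assume "g \<in> carrier G"
    then show "(\<Sum>k<n. f g * \<rho> g $$ (i, k) * B $$ (k, j)) = f g * (\<rho> g * B) $$ (i, j)"
      using rho_carrier[of g] B ij
      by (simp add: scalar_prod_def atLeast0LessThan sum_distrib_left mult.assoc)
  qed
  finally show ?thesis .
qed

lemma index_mult_rho_sum:
  assumes B: "B \<in> carrier_mat n n" and ij: "i < n" "j < n"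
  shows "(B * rho_sum f) $$ (i, j) = (\<Sum>g\<in>carrier G. f g * (B * \<rho> g) $$ (i, j))"
proof -
  have "(B * rho_sum f) $$ (i, j) = (\<Sum>k<n. B $$ (i, k) * (\<Sum>g\<in>carrier G. f g * \<rho> g $$ (k, j)))"
    using B ij unfolding rho_sum_def by (auto simp: scalar_prod_def atLeast0LessThan intro!: sum.cong)
  also have "\<dots> = (\<Sum>g\<in>carrier G. \<Sum>k<n. f g * (B $$ (i, k) * \<rho> g $$ (k, j)))"
    by (simp add: sum_distrib_left sum.swap[of _ "{..<n}"] mult.left_commute)
  also have "\<dots> = (\<Sum>g\<in>carrier G. f g * (B * \<rho> g) $$ (i, j))"
  proof (rule sum.cong[OF refl])
    fix g assume "g \<in> carrier G"
    then show "(\<Sum>k<n. f g * (B $$ (i, k) * \<rho> g $$ (k, j))) = f g * (B * \<rho> g) $$ (i, j)"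
      using rho_carrier[of g] B ij by (simp add: scalar_prod_def atLeast0LessThan sum_distrib_left)
  qed
  finally show ?thesis .
qed

lemma mtrace_rho_sum_mult:
  assumes B: "B \<in> carrier_mat n n"
  shows "mtrace (rho_sum f * B) = (\<Sum>g\<in>carrier G. f g * mtrace (\<rho> g * B))"
proof -
  have "dim_row (rho_sum f * B) = n" using rho_sum_carrier[of f] by simp
  then have "mtrace (rho_sum f * B) = (\<Sum>i<n. \<Sum>g\<in>carrier G. f g * (\<rho> g * B) $$ (i, i))"
    unfolding mtrace_def by (intro sum.cong refl index_rho_sum_mult[OF B]) simp_all
  also have "\<dots> = (\<Sum>g\<in>carrier G. f g * mtrace (\<rho> g * B))"
    unfolding mtrace_def using rho_carrier
    by (subst sum.swap) (auto simp: sum_distrib_left intro!: sum.cong)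
  finally show ?thesis .
qed

lemma rho_sum_class_function_commute:
  assumes cf: "\<And>g h. g \<in> carrier G \<Longrightarrow> h \<in> carrier G \<Longrightarrow> f (h \<otimes> g \<otimes> inv h) = f g"
    and h: "h \<in> carrier G"
  shows "rho_sum f * \<rho> h = \<rho> h * rho_sum f"
proof -
  have entries: "(\<Sum>g\<in>carrier G. f g * (\<rho> g * \<rho> h) $$ (i, j))
      = (\<Sum>g\<in>carrier G. f g * (\<rho> h * \<rho> g) $$ (i, j))" for i j
  proof -
    have "(\<Sum>g\<in>carrier G. f g * (\<rho> g * \<rho> h) $$ (i, j))
        = (\<Sum>g\<in>carrier G. f g * \<rho> (g \<otimes> h) $$ (i, j))"
      using h by (intro sum.cong) (simp_all add: rho_mult)
    also have "\<dots> = (\<Sum>g\<in>carrier G. f (h \<otimes> g \<otimes> inv h) * \<rho> ((h \<otimes> g \<otimes> inv h) \<otimes> h) $$ (i, j))"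
      using sum_reindex_conj[OF h, of "\<lambda>g. f g * \<rho> (g \<otimes> h) $$ (i, j)"] by simp
    also have "\<dots> = (\<Sum>g\<in>carrier G. f g * \<rho> (h \<otimes> g) $$ (i, j))"
      using cf h by (intro sum.cong) (auto simp: m_assoc)
    also have "\<dots> = (\<Sum>g\<in>carrier G. f g * (\<rho> h * \<rho> g) $$ (i, j))"
      using h by (intro sum.cong) (simp_all add: rho_mult)
    finally show ?thesis .
  qed
  show ?thesis
  proof (rule eq_matI)
    fix i j assume "i < dim_row (\<rho> h * rho_sum f)" "j < dim_col (\<rho> h * rho_sum f)"
    then have ij: "i < n" "j < n" using rho_carrier[OF h] rho_sum_carrier[of f] by auto
    show "(rho_sum f * \<rho> h) $$ (i, j) = (\<rho> h * rho_sum f) $$ (i, j)"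
      unfolding index_rho_sum_mult[OF rho_carrier[OF h] ij]
        index_mult_rho_sum[OF rho_carrier[OF h] ij]
      by (rule entries)
  qed (use rho_carrier[OF h] rho_sum_carrier[of f] in auto)
qed

(* Schur's lemma makes rho_sum f a scalar c; taking traces against 1 and \<rho> y gives c n and
   c \<chi>(y). *)

lemma sum_class_function_chi_mult:
  assumes cf: "\<And>g h. g \<in> carrier G \<Longrightarrow> h \<in> carrier G \<Longrightarrow> f (h \<otimes> g \<otimes> inv h) = f g"
    and y: "y \<in> carrier G"
  shows "of_nat n * (\<Sum>g\<in>carrier G. f g * chi (g \<otimes> y)) = (\<Sum>g\<in>carrier G. f g * chi g) * chi y"
proof -
  obtain c where c: "rho_sum f = c \<cdot>\<^sub>m 1\<^sub>m n"
    by (rule schur_lemma[OF irreducible rho_sum_carrier rho_sum_class_function_commute[of f, OF cf]])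
  have "(\<Sum>g\<in>carrier G. f g * chi g) = mtrace (rho_sum f * 1\<^sub>m n)"
    unfolding mtrace_rho_sum_mult[OF one_carrier_mat] chi_def
    by (intro sum.cong refl) (simp add: right_mult_one_mat[OF rho_carrier])
  also have "\<dots> = c * of_nat n" unfolding c by (simp add: mtrace_def)
  finally have "(\<Sum>g\<in>carrier G. f g * chi g) = c * of_nat n" .
  moreover have "(\<Sum>g\<in>carrier G. f g * chi (g \<otimes> y)) = mtrace (rho_sum f * \<rho> y)"
    unfolding mtrace_rho_sum_mult[OF rho_carrier[OF y]] chi_def using y by (simp add: rho_mult)
  moreover have "mtrace (rho_sum f * \<rho> y) = c * chi y"
    unfolding c chi_def using rho_carrier[OF y] by (simp add: mtrace_def sum_distrib_left)
  ultimately show ?thesis by (simp add: algebra_simps)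
qed

definition central_char :: "'a \<Rightarrow> complex" where
  "central_char z = (SOME c. \<rho> z = c \<cdot>\<^sub>m 1\<^sub>m n)"

lemma rho_centre: assumes z: "z \<in> centre G" shows "\<rho> z = central_char z \<cdot>\<^sub>m 1\<^sub>m n"
proof -
  have zc: "z \<in> carrier G" using z unfolding centre_def by auto
  have "\<rho> z * \<rho> g = \<rho> g * \<rho> z" if "g \<in> carrier G" for g
    using z that zc unfolding centre_def by (auto simp: rho_mult[symmetric])
  then obtain c where "\<rho> z = c \<cdot>\<^sub>m 1\<^sub>m n"
    by (rule schur_lemma[OF irreducible rho_carrier[OF zc]])
  then have "\<exists>c. \<rho> z = c \<cdot>\<^sub>m 1\<^sub>m n" by blast
  then show ?thesis unfolding central_char_def by (rule someI_ex)
qed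

lemma chi_centre_mult:
  assumes z: "z \<in> centre G" and g: "g \<in> carrier G"
  shows "chi (z \<otimes> g) = central_char z * chi g"
proof -
  have "z \<in> carrier G" using z unfolding centre_def by auto
  then show ?thesis unfolding chi_def using rho_mult[OF _ g] rho_centre[OF z] rho_carrier[OF g]
    by (simp add: mtrace_def sum_distrib_left)
qed

end

section \<open>The class-size weighted product of two irreducible characters\<close>

locale irrep_pair = irrep G n \<rho> + R': irrep G n' \<rho>'
  for G (structure) and n \<rho> n' \<rho>'
begin

definition S :: complex where
  "S = (\<Sum>g\<in>carrier G. of_nat (card (conj_class G g)) * chi g * cnj (R'.chi g))"

lemma S_eq_sum_pow_coprime:
  assumes k: "coprime k (order G)" "k > 0"
  shows "S = (\<Sum>g\<in>carrier G. of_nat (card (conj_class G g)) * chi (g [^] k) * cnj (R'.chi (g [^] k)))"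
proof -
  have "S = (\<Sum>g\<in>carrier G.
      of_nat (card (conj_class G (g [^] k))) * chi (g [^] k) * cnj (R'.chi (g [^] k)))"
    unfolding S_def using sum.reindex_bij_betw[OF bij_betw_pow_coprime_order[OF k],
        of "\<lambda>g. of_nat (card (conj_class G g)) * chi g * cnj (R'.chi g)"] by simp
  also have "\<dots> = (\<Sum>g\<in>carrier G. of_nat (card (conj_class G g)) * chi (g [^] k) * cnj (R'.chi (g [^] k)))"
    using card_conj_class_pow[OF _ k] by (intro sum.cong) auto
  finally show ?thesis .
qed

lemma S_Rats: "S \<in> \<rat>"
proof -
  define K where "K = {k\<in>{1..order G}. coprime k (order G)}"
  have N: "order G > 0" using finite_carrier order_gt_0_iff_finite by blast
  have "card K > 0" unfolding K_def using N by (auto simp: card_gt_0_iff intro!: exI[of _ 1])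
  have "of_nat (card K) * S = (\<Sum>k\<in>K. S)" by simp
  also have "\<dots> = (\<Sum>k\<in>K. \<Sum>g\<in>carrier G. of_nat (card (conj_class G g)) *
      (\<Sum>i<n. \<Sum>j<n'. (eigvals g ! i * cnj (R'.eigvals g ! j)) ^ k))"
    using S_eq_sum_pow_coprime chi_pow_eq_sum_eigvals R'.chi_pow_eq_sum_eigvals unfolding K_def
    by (intro sum.cong refl) (auto simp: mult.assoc cnj_sum sum_product power_mult_distrib)
  also have "\<dots> = (\<Sum>g\<in>carrier G. of_nat (card (conj_class G g)) *
      (\<Sum>i<n. \<Sum>j<n'. ramanujan_sum (order G) (eigvals g ! i * cnj (R'.eigvals g ! j))))"
    unfolding ramanujan_sum_def K_def[symmetric]
    by (subst sum.swap) (simp add: sum_distrib_left sum.swap[of _ K])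
  also have "\<dots> \<in> \<int>"
  proof (intro Ints_sum Ints_mult)
    fix g i j assume g: "g \<in> carrier G" and i: "i \<in> {..<n}" and j: "j \<in> {..<n'}"
    have "eigvals g ! i ^ order G = 1" "R'.eigvals g ! j ^ order G = 1"
      using eigvals_spec[OF g] R'.eigvals_spec[OF g] i j by auto
    then have "(eigvals g ! i * cnj (R'.eigvals g ! j)) ^ order G = 1"
      by (metis complex_cnj_one complex_cnj_power mult_1 power_mult_distrib)
    then show "ramanujan_sum (order G) (eigvals g ! i * cnj (R'.eigvals g ! j)) \<in> \<int>"
      using ramanujan_sum_Ints N by blast
  qed auto
  finally have "of_nat (card K) * S \<in> \<rat>" using Ints_subset_Rats by blast
  then have "(of_nat (card K) * S) / of_nat (card K) \<in> \<rat>" by (intro Rats_divide) auto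
  then show ?thesis using \<open>card K > 0\<close> by simp
qed

lemma S_eq_zero_if_central_chars_differ:
  assumes z: "z \<in> centre G" and ne: "central_char z * cnj (R'.central_char z) \<noteq> 1"
  shows "S = 0"
proof -
  have zc: "z \<in> carrier G" using z unfolding centre_def by auto
  have "S = (\<Sum>g\<in>carrier G.
      of_nat (card (conj_class G (z \<otimes> g))) * chi (z \<otimes> g) * cnj (R'.chi (z \<otimes> g)))"
    unfolding S_def by (rule sum_reindex_mult_left[OF zc, symmetric])
  also have "\<dots> = central_char z * cnj (R'.central_char z) * S"
    unfolding S_def sum_distrib_left
    using card_conj_class_centre_mult[OF z] chi_centre_mult[OF z] R'.chi_centre_mult[OF z]
    by (intro sum.cong refl) (simp add: algebra_simps)
  finally show ?thesis using ne by (metis mult_cancel_right1 mult.commute)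
qed

lemma S_div_card_centre_mult_chi:
  assumes trivial: "\<And>z. z \<in> centre G \<Longrightarrow> central_char z * cnj (R'.central_char z) = 1"
    and y: "y \<in> carrier G"
  shows "S / of_nat (card (centre G)) * chi y
    = (\<Sum>c\<in>rcosets (centre G). of_nat (n * card (conj_class G (rcoset_rep c)))
        * cnj (R'.chi (rcoset_rep c)) * chi (rcoset_rep c \<otimes> y))"
proof -
  define f where "f g = of_nat (card (conj_class G g)) * cnj (R'.chi g)" for g
  have "of_nat n * (\<Sum>g\<in>carrier G. f g * chi (g \<otimes> y)) = S * chi y"
    using sum_class_function_chi_mult[of f, OF _ y] card_conj_class_conj R'.chi_conj
    unfolding S_def f_def by (simp add: algebra_simps)
  moreover have "f (z \<otimes> g) * chi (z \<otimes> g \<otimes> y) = f g * chi (g \<otimes> y)"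
    if z: "z \<in> centre G" and g: "g \<in> carrier G" for z g
  proof -
    have "z \<in> carrier G" using z unfolding centre_def by auto
    then have "chi (z \<otimes> g \<otimes> y) = central_char z * chi (g \<otimes> y)"
      using chi_centre_mult[OF z, of "g \<otimes> y"] g y by (simp add: m_assoc)
    then show ?thesis
      unfolding f_def
      using card_conj_class_centre_mult[OF z g] R'.chi_centre_mult[OF z g] trivial[OF z]
      by (simp add: algebra_simps)
  qed
  ultimately have "S * chi y = of_nat n * (of_nat (card (centre G))
      * (\<Sum>c\<in>rcosets (centre G). f (rcoset_rep c) * chi (rcoset_rep c \<otimes> y)))"
    using sum_constant_on_rcosets[OF centre_subgroup, of "\<lambda>g. f g * chi (g \<otimes> y)"] by simp
  then show ?thesis
    using card_centre_pos unfolding f_def by (simp add: field_simps sum_distrib_left)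
qed

lemma S_div_card_centre_integral_relation:
  assumes trivial: "\<And>z. z \<in> centre G \<Longrightarrow> central_char z * cnj (R'.central_char z) = 1"
    and y: "y \<in> carrier G"
  shows "S / of_nat (card (centre G)) * (u * chi y)
    = (\<Sum>(c, k)\<in>(rcosets (centre G)) \<times> {..<n'}. of_nat (n * card (conj_class G (rcoset_rep c)))
        * (cnj (R'.eigvals (rcoset_rep c) ! k) * u * chi (rcoset_rep c \<otimes> y)))"
proof -
  let ?R = "rcosets (centre G)" and ?r = rcoset_rep
  have "S / of_nat (card (centre G)) * (u * chi y) = u * (S / of_nat (card (centre G)) * chi y)"
    by (simp add: mult_ac)
  also have "\<dots>
      = u * (\<Sum>c\<in>?R. of_nat (n * card (conj_class G (?r c))) * cnj (R'.chi (?r c)) * chi (?r c \<otimes> y))"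
    by (simp only: S_div_card_centre_mult_chi[OF trivial y])
  also have "\<dots> = (\<Sum>c\<in>?R. \<Sum>k<n'. of_nat (n * card (conj_class G (?r c)))
      * (cnj (R'.eigvals (?r c) ! k) * u * chi (?r c \<otimes> y)))"
    unfolding sum_distrib_left
  proof (rule sum.cong[OF refl])
    fix c assume "c \<in> ?R"
    then have r: "?r c \<in> carrier G" by (rule rcoset_rep(2)[OF centre_subgroup])
    have "cnj (R'.chi (?r c)) = (\<Sum>k<n'. cnj (R'.eigvals (?r c) ! k))"
      using R'.chi_pow_eq_sum_eigvals[OF r, of 1] r by (simp add: cnj_sum)
    then show "u * (of_nat (n * card (conj_class G (?r c))) * cnj (R'.chi (?r c)) * chi (?r c \<otimes> y))
        = (\<Sum>k<n'. of_nat (n * card (conj_class G (?r c)))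
            * (cnj (R'.eigvals (?r c) ! k) * u * chi (?r c \<otimes> y)))"
      by (simp add: sum_distrib_left sum_distrib_right mult_ac)
  qed
  finally show ?thesis by (simp add: sum.cartesian_product)
qed

lemma S_div_card_centre_algebraic_int:
  assumes trivial: "\<And>z. z \<in> centre G \<Longrightarrow> central_char z * cnj (R'.central_char z) = 1"
  shows "algebraic_int (S / of_nat (card (centre G)))"
proof -
  let ?R = "rcosets (centre G)" and ?r = rcoset_rep
  define I where "I = {u :: complex. u ^ order G = 1} \<times> carrier G"
  have N: "order G > 0" using finite_carrier order_gt_0_iff_finite by blast
  show ?thesis
  proof (rule algebraic_int_of_integer_combinations[where I = I and z = "(1, \<one>)"
        and J = "?R \<times> {..<n'}" and t = "\<lambda>(u, y). u * chi y"
        and c = "\<lambda>(c, k). int (n * card (conj_class G (?r c)))"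
        and \<sigma> = "\<lambda>(u, y) (c, k). (cnj (R'.eigvals (?r c) ! k) * u, ?r c \<otimes> y)"])
    show "finite I" unfolding I_def using N finite_carrier by (simp add: finite_roots_unity)
    show "(1, \<one>) \<in> I" "(\<lambda>(u, y). u * chi y) (1, \<one>) \<noteq> 0"
      unfolding I_def chi_def using n_pos by (simp_all add: rho_one mtrace_def)
  next
    fix i j assume "i \<in> I" "j \<in> ?R \<times> {..<n'}"
    then obtain u y c k where i: "i = (u, y)" "u ^ order G = 1" "y \<in> carrier G"
      and j: "j = (c, k)" "c \<in> ?R" "k < n'" unfolding I_def by auto
    have r: "?r c \<in> carrier G" using rcoset_rep(2)[OF centre_subgroup j(2)] .
    have "R'.eigvals (?r c) ! k ^ order G = 1" using R'.eigvals_spec[OF r] j(3) by simp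
    then have "(cnj (R'.eigvals (?r c) ! k) * u) ^ order G = 1" using i(2)
      by (simp add: power_mult_distrib flip: complex_cnj_power)
    then show "(\<lambda>(u, y) (c, k). (cnj (R'.eigvals (?r c) ! k) * u, ?r c \<otimes> y)) i j \<in> I"
      unfolding I_def i j using r i(3) by simp
  next
    fix i assume "i \<in> I"
    then obtain u y where "i = (u, y)" "y \<in> carrier G" unfolding I_def by auto
    then show "S / of_nat (card (centre G)) * (\<lambda>(u, y). u * chi y) i
      = (\<Sum>j\<in>?R \<times> {..<n'}. of_int ((\<lambda>(c, k). int (n * card (conj_class G (?r c)))) j)
          * (\<lambda>(u, y). u * chi y) ((\<lambda>(u, y) (c, k). (cnj (R'.eigvals (?r c) ! k) * u, ?r c \<otimes> y)) i j))"
      using S_div_card_centre_integral_relation[OF trivial, of y u] by (simp add: case_prod_beta)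
  qed
qed

theorem S_int_multiple_of_card_centre: "\<exists>m::int. S = of_int m \<and> int (card (centre G)) dvd m"
proof (cases "\<forall>z\<in>centre G. central_char z * cnj (R'.central_char z) = 1")
  case True
  then have "algebraic_int (S / of_nat (card (centre G)))"
    using S_div_card_centre_algebraic_int by blast
  moreover have "S / of_nat (card (centre G)) \<in> \<rat>" using S_Rats by simp
  ultimately have "S / of_nat (card (centre G)) \<in> \<int>" by (rule rational_algebraic_int_is_int)
  then obtain m where "S / of_nat (card (centre G)) = of_int m" by (elim Ints_cases)
  then have "S = of_int (int (card (centre G)) * m)"
    using card_centre_pos by (simp add: field_simps)
  then show ?thesis by (intro exI[of _ "int (card (centre G)) * m"]) simp
next
  case False
  then have "S = 0" using S_eq_zero_if_central_chars_differ by blast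
  then show ?thesis by (intro exI[of _ 0]) simp
qed

end

theorem proposition3p2:
  fixes G :: "('g, 'b) monoid_scheme" and \<chi> \<chi>' :: "'g \<Rightarrow> complex"
  assumes "group G" and "finite (carrier G)"
    and "\<chi> \<in> Irr G" and "\<chi>' \<in> Irr G"
  shows "\<exists>m::int. (\<Sum>C\<in>Conj G. of_nat (card C ^ 2) * class_val \<chi> C * cnj (class_val \<chi>' C))
                    = of_int m \<and> int (card (centre G)) dvd m"
proof -
  obtain n \<rho> n' \<rho>' where irr: "irreducible_rep G n \<rho>" "irreducible_rep G n' \<rho>'"
    and \<chi>: "\<chi> = (\<lambda>g. if g \<in> carrier G then mtrace (\<rho> g) else 0)"
    and \<chi>': "\<chi>' = (\<lambda>g. if g \<in> carrier G then mtrace (\<rho>' g) else 0)"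
    using assms(3,4) unfolding Irr_def by auto
  have "finite_group G"
    using assms(1,2) by (intro finite_group.intro finite_group_axioms.intro)
  then interpret irrep_pair G n \<rho> n' \<rho>'
    using irr by (simp add: irrep_pair_def irrep_def irrep_axioms_def)
  have \<chi>_class: "\<chi> (h \<otimes>\<^bsub>G\<^esub> g \<otimes>\<^bsub>G\<^esub> inv\<^bsub>G\<^esub> h) = \<chi> g"
    "\<chi>' (h \<otimes>\<^bsub>G\<^esub> g \<otimes>\<^bsub>G\<^esub> inv\<^bsub>G\<^esub> h) = \<chi>' g"
    if "g \<in> carrier G" "h \<in> carrier G" for g h
    using that chi_conj[OF that] R'.chi_conj[OF that] by (simp_all add: \<chi> \<chi>' chi_def R'.chi_def)
  have "(\<Sum>C\<in>Conj G. of_nat (card C ^ 2) * class_val \<chi> C * cnj (class_val \<chi>' C))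
      = (\<Sum>g\<in>carrier G. of_nat (card (conj_class G g)) * \<chi> g * cnj (\<chi>' g))"
    by (rule sum_Conj_eq_sum_carrier[of \<chi> \<chi>', OF \<chi>_class])
  also have "\<dots> = S"
    unfolding S_def by (intro sum.cong refl) (simp add: \<chi> \<chi>' chi_def R'.chi_def)
  finally show ?thesis using S_int_multiple_of_card_centre by simp
qed

end
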